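(* Let $G$ be a GSOS system and $G^+$ the positive preg system constructed from it as described in the context. Then for each closed term $p$ and action $a$: (1) for all closed $p'$, $p\xrightarrow{a}p'$ in $G$ if and only if $p\xrightarrow{a}p'$ in $G^+$; (2) $p\ \mathrm{cannot}(a)$ holds in $G^+$ if and only if $p$ has no $a$-transition in $G^+$ (and therefore in $G$).
   Context: Fix a finite nonempty set $\mathcal A$ of actions. A GSOS rule for an $l$-ary operation $f$ is a rule with premises $\{x_i\xrightarrow{a_{ij}}y_{ij}\mid i\in I^+,j\in I_i\}\cup\{x_i\not\xrightarrow{b}\mid i\in I^-,b\in\mathcal B_i\}$ and conclusion $f(x_1,\dots,x_l)\xrightarrow{c}C$, where the $x_i,y_{ij}$ are pairwise distinct variables, $I^+,I^-\subseteq\{1,\dots,l\}$, the $I_i$ finite, and $C$ a term with variables among the $x_i,y_{ij}$. A GSOS system $G$ is a finite signature with finite set of such rules; its transition relation is the unique one on closed terms such that $f(t_1,\ldots,t_l)\xrightarrow{c}t'$ iff some rule for $f$ with action $c$ and closed substitution $\sigma$ with $\sigma(x_i)=t_i$, $\sigma(C)=t'$ satisfy all premises ($\sigma(x_i)\xrightarrow{a_{ij}}\sigma(y_{ij})$; $\sigma(x_i)$ has no $b$-transition). A preg system additionally allows predicates: premises $Px_i$, $\neg Px_i$ and predicate rules with conclusion $P(f(\vec x))$, with the analogous unique semantics (a closed $f(\vec t)$ satisfies $P$ iff some predicate rule for $P$ and $f$ has all premises satisfied under some $\sigma$ with $\sigma(x_i)=t_i$). Construction of $G^+$: same signature and actions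 as $G$, predicates $\mathrm{cannot}(a)$ for each $a\in\mathcal A$. (i) Each rule of $G$ is a rule of $G^+$ with every negative premise $x\not\xrightarrow{a}$ replaced by $x\ \mathrm{cannot}(a)$. (ii) For each constant $f$ and action $a$ such that $G$ has no transition rule with principal operation $f$ and action $a$, add the axiom $f\ \mathrm{cannot}(a)$. (iii) For each operation $f$ of arity $\ge1$ and action $a$, let $R(f,a)$ be the set of rules of $G$ with principal operation $f$ and action $a$, and $H(R(f,a))$ the set of premises of those rules; for each choice function $\phi:R(f,a)\to H(R(f,a))$ mapping each rule to one of its premises, add the predicate rule with premises $\{\mathrm{neg}(\phi(\xi))\mid\xi\in R(f,a)\}$ and conclusion $f(x_1,\dots,x_l)\ \mathrm{cannot}(a)$, where $\mathrm{neg}(x\xrightarrow{a}x')=x\ \mathrm{cannot}(a)$ and $\mathrm{neg}(x\not\xrightarrow{a})=x\xrightarrow{a}x'$ for a variable $x'$, the targets of such positive transition premises being chosen pairwise distinct and fresh. *)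

theory Defs
  imports Main
begin

text \<open>Open terms over a signature; variables of rules are
  Inl i  (the i-th argument variable x_i, 0-based) or Inr y (a target variable y).\<close>
datatype (funs: 'f, vars: 'x) "term" = Var 'x | Fn 'f "('f, 'x) term list"

datatype 'f gterm = GFn 'f "'f gterm list"

inductive wf_gterm :: "'f set \<Rightarrow> ('f \<Rightarrow> nat) \<Rightarrow> 'f gterm \<Rightarrow> bool" for sig ar where
  "f \<in> sig \<Longrightarrow> length ts = ar f \<Longrightarrow> (\<forall>t\<in>set ts. wf_gterm sig ar t)
     \<Longrightarrow> wf_gterm sig ar (GFn f ts)"

inductive wf_oterm :: "'f set \<Rightarrow> ('f \<Rightarrow> nat) \<Rightarrow> ('f, 'x) term \<Rightarrow> bool" for sig ar where
  "wf_oterm sig ar (Var x)"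
| "f \<in> sig \<Longrightarrow> length us = ar f \<Longrightarrow> (\<forall>u\<in>set us. wf_oterm sig ar u)
     \<Longrightarrow> wf_oterm sig ar (Fn f us)"

fun inst :: "'f gterm list \<Rightarrow> ('v \<Rightarrow> 'f gterm) \<Rightarrow> ('f, nat + 'v) term \<Rightarrow> 'f gterm" where
  "inst ts \<sigma> (Var (Inl i)) = ts ! i"
| "inst ts \<sigma> (Var (Inr y)) = \<sigma> y"
| "inst ts \<sigma> (Fn g us) = GFn g (map (inst ts \<sigma>) us)"

text \<open>A GSOS rule for f: positive premises (i,a,y) meaning x_i -a-> y,
  negative premises (i,b) meaning x_i has no b-transition, conclusion
  f(x_1..x_l) -c-> C.\<close>
record ('f, 'a, 'v) grule =
  g_op :: 'f
  g_pos :: "(nat \<times> 'a \<times> 'v) set"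
  g_neg :: "(nat \<times> 'a) set"
  g_act :: 'a
  g_tgt :: "('f, nat + 'v) term"

record ('f, 'a, 'v) gsys =
  g_sig :: "'f set"
  g_ar :: "'f \<Rightarrow> nat"
  g_rules :: "('f, 'a, 'v) grule set"

definition wf_grule :: "'a set \<Rightarrow> ('f, 'a, 'v) gsys \<Rightarrow> ('f, 'a, 'v) grule \<Rightarrow> bool" where
  "wf_grule A G \<rho> \<longleftrightarrow>
     (let l = g_ar G (g_op \<rho>) in
        g_op \<rho> \<in> g_sig G \<and> g_act \<rho> \<in> A
      \<and> finite (g_pos \<rho>) \<and> finite (g_neg \<rho>)
      \<and> (\<forall>(i, a, y) \<in> g_pos \<rho>. i < l \<and> a \<in> A)
      \<and> (\<forall>(i, b) \<in> g_neg \<rho>. i < l \<and> b \<in> A)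
      \<and> (\<forall>(i, a, y) \<in> g_pos \<rho>. \<forall>(i', a', y') \<in> g_pos \<rho>. y = y' \<longrightarrow> i = i' \<and> a = a')
      \<and> wf_oterm (g_sig G) (g_ar G) (g_tgt \<rho>)
      \<and> vars (g_tgt \<rho>) \<subseteq> {Inl i | i. i < l} \<union> {Inr y | i a y. (i, a, y) \<in> g_pos \<rho>})"

definition wf_gsys :: "'a set \<Rightarrow> ('f, 'a, 'v) gsys \<Rightarrow> bool" where
  "wf_gsys A G \<longleftrightarrow> finite A \<and> A \<noteq> {} \<and> finite (g_sig G) \<and> finite (g_rules G)
     \<and> (\<forall>\<rho> \<in> g_rules G. wf_grule A G \<rho>)"

text \<open>Semantics: Ts!i is the set of transitions (action, target) of the i-th argument.\<close>
definition gstep :: "('f, 'a, 'v) gsys \<Rightarrow> 'f \<Rightarrow> 'f gterm list \<Rightarrow> ('a \<times> 'f gterm) set list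
    \<Rightarrow> ('a \<times> 'f gterm) set" where
  "gstep G f ts Ts = {(c, t). \<exists>\<rho> \<in> g_rules G. g_op \<rho> = f \<and> g_act \<rho> = c \<and>
      (\<exists>\<sigma>. (\<forall>(i, a, y) \<in> g_pos \<rho>. (a, \<sigma> y) \<in> Ts ! i)
          \<and> (\<forall>(i, b) \<in> g_neg \<rho>. \<forall>u. (b, u) \<notin> Ts ! i)
          \<and> t = inst ts \<sigma> (g_tgt \<rho>))}"

fun gsem :: "('f, 'a, 'v) gsys \<Rightarrow> 'f gterm \<Rightarrow> ('a \<times> 'f gterm) set" where
  "gsem G (GFn f ts) = gstep G f ts (map (gsem G) ts)"

datatype ('f, 'a, 'p, 'v) concl = CTrans 'a "('f, nat + 'v) term" | CPred 'p

record ('f, 'a, 'p, 'v) prule =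
  p_op :: 'f
  p_pos :: "(nat \<times> 'a \<times> 'v) set"
  p_neg :: "(nat \<times> 'a) set"
  p_ppos :: "(nat \<times> 'p) set"
  p_pneg :: "(nat \<times> 'p) set"
  p_concl :: "('f, 'a, 'p, 'v) concl"

record ('f, 'a, 'p, 'v) psys =
  p_sig :: "'f set"
  p_ar :: "'f \<Rightarrow> nat"
  p_rules :: "('f, 'a, 'p, 'v) prule set"

definition pprem_ok :: "('f, 'a, 'p, 'v) prule \<Rightarrow> (('a \<times> 'f gterm) set \<times> 'p set) list
    \<Rightarrow> ('v \<Rightarrow> 'f gterm) \<Rightarrow> bool" where
  "pprem_ok \<rho> Ts \<sigma> \<longleftrightarrow>
      (\<forall>(i, a, y) \<in> p_pos \<rho>. (a, \<sigma> y) \<in> fst (Ts ! i))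
    \<and> (\<forall>(i, b) \<in> p_neg \<rho>. \<forall>u. (b, u) \<notin> fst (Ts ! i))
    \<and> (\<forall>(i, P) \<in> p_ppos \<rho>. P \<in> snd (Ts ! i))
    \<and> (\<forall>(i, P) \<in> p_pneg \<rho>. P \<notin> snd (Ts ! i))"

definition pstep :: "('f, 'a, 'p, 'v) psys \<Rightarrow> 'f \<Rightarrow> 'f gterm list
    \<Rightarrow> (('a \<times> 'f gterm) set \<times> 'p set) list \<Rightarrow> ('a \<times> 'f gterm) set \<times> 'p set" where
  "pstep S f ts Ts =
     ({(c, t). \<exists>\<rho> \<in> p_rules S. p_op \<rho> = f \<and>
         (\<exists>C \<sigma>. p_concl \<rho> = CTrans c C \<and> pprem_ok \<rho> Ts \<sigma> \<and> t = inst ts \<sigma> C)},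
      {P. \<exists>\<rho> \<in> p_rules S. p_op \<rho> = f \<and> p_concl \<rho> = CPred P \<and> (\<exists>\<sigma>. pprem_ok \<rho> Ts \<sigma>)})"

text \<open>The (unique) transitions and predicates of a preg system, by structural recursion:
  first component = transitions (action, target), second = predicates satisfied.\<close>
fun psem :: "('f, 'a, 'p, 'v) psys \<Rightarrow> 'f gterm \<Rightarrow> ('a \<times> 'f gterm) set \<times> 'p set" where
  "psem S (GFn f ts) = pstep S f ts (map (psem S) ts)"

text \<open>Predicate cannot(a) is represented by a itself (predicate type = action type).
  Target variables of G+ are Inl y (from G) or Inr xi (fresh variable attached to rule xi).\<close>

datatype ('a, 'v) prem = PPos nat 'a 'v | PNeg nat 'a

definition prems :: "('f, 'a, 'v) grule \<Rightarrow> ('a, 'v) prem set" where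
  "prems \<rho> = {PPos i a y | i a y. (i, a, y) \<in> g_pos \<rho>} \<union> {PNeg i b | i b. (i, b) \<in> g_neg \<rho>}"

definition Rfa :: "('f, 'a, 'v) gsys \<Rightarrow> 'f \<Rightarrow> 'a \<Rightarrow> ('f, 'a, 'v) grule set" where
  "Rfa G f a = {\<rho> \<in> g_rules G. g_op \<rho> = f \<and> g_act \<rho> = a}"

definition conv :: "('f, 'a, 'v) grule \<Rightarrow> ('f, 'a, 'a, 'v + ('f, 'a, 'v) grule) prule" where
  "conv \<rho> = \<lparr> p_op = g_op \<rho>,
              p_pos = {(i, a, Inl y) | i a y. (i, a, y) \<in> g_pos \<rho>},
              p_neg = {},
              p_ppos = g_neg \<rho>,
              p_pneg = {},
              p_concl = CTrans (g_act \<rho>) (map_term id (map_sum id Inl) (g_tgt \<rho>)) \<rparr>"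

definition cannot_axiom :: "'f \<Rightarrow> 'a \<Rightarrow> ('f, 'a, 'a, 'v + ('f, 'a, 'v) grule) prule" where
  "cannot_axiom f a = \<lparr> p_op = f, p_pos = {}, p_neg = {}, p_ppos = {}, p_pneg = {},
                        p_concl = CPred a \<rparr>"

text \<open>Rule (iii) for choice function phi on R = R(f,a): each rule xi contributes neg(phi xi);
  the fresh target of a positive premise stemming from xi is Inr xi.\<close>
definition cannot_rule :: "'f \<Rightarrow> 'a \<Rightarrow> ('f, 'a, 'v) grule set \<Rightarrow> (('f, 'a, 'v) grule \<Rightarrow> ('a, 'v) prem)
    \<Rightarrow> ('f, 'a, 'a, 'v + ('f, 'a, 'v) grule) prule" where
  "cannot_rule f a R \<phi> = \<lparr> p_op = f,
      p_pos = {(i, b, Inr \<xi>) | i b \<xi>. \<xi> \<in> R \<and> \<phi> \<xi> = PNeg i b},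
      p_neg = {},
      p_ppos = {(i, c) | i c y \<xi>. \<xi> \<in> R \<and> \<phi> \<xi> = PPos i c y},
      p_pneg = {},
      p_concl = CPred a \<rparr>"

definition plus :: "'a set \<Rightarrow> ('f, 'a, 'v) gsys \<Rightarrow> ('f, 'a, 'a, 'v + ('f, 'a, 'v) grule) psys" where
  "plus A G = \<lparr> p_sig = g_sig G, p_ar = g_ar G,
      p_rules = conv ` g_rules G
        \<union> {cannot_axiom f a | f a. f \<in> g_sig G \<and> g_ar G f = 0 \<and> a \<in> A \<and> Rfa G f a = {}}
        \<union> {cannot_rule f a (Rfa G f a) \<phi> | f a \<phi>. f \<in> g_sig G \<and> 1 \<le> g_ar G f \<and> a \<in> A
              \<and> (\<forall>\<xi> \<in> Rfa G f a. \<phi> \<xi> \<in> prems \<xi>)} \<rparr>"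

end

theory Submission
  imports Defs
begin

text \<open>By structural induction on p, assuming that the arguments of the outermost
  operation f satisfy the claim. Then a rule of G fires for f exactly when its translation in
  G+ fires, since cannot(b) of an argument coincides with its lack of b-transitions. And
  f(ts) has no a-transition iff every rule in R(f,a) has a premise that fails; choosing one
  failing premise per rule gives a choice function whose rule (iii) derives cannot(a), while
  conversely the premises of any rule (iii) negate one premise of every rule in R(f,a).\<close>

fun prem_holds :: "('a \<times> 'f gterm) set list \<Rightarrow> ('a, 'v) prem \<Rightarrow> bool" where
  "prem_holds Ts (PPos i c y) \<longleftrightarrow> (\<exists>u. (c, u) \<in> Ts ! i)"
| "prem_holds Ts (PNeg i b) \<longleftrightarrow> (\<forall>u. (b, u) \<notin> Ts ! i)"

definition args_agree :: "'a set \<Rightarrow> nat \<Rightarrow> (('a \<times> 'f gterm) set \<times> 'a set) list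
    \<Rightarrow> ('a \<times> 'f gterm) set list \<Rightarrow> bool" where
  "args_agree A n Ps Ts \<longleftrightarrow> (\<forall>i < n. fst (Ps ! i) = Ts ! i
      \<and> (\<forall>b \<in> A. b \<in> snd (Ps ! i) \<longleftrightarrow> (\<forall>u. (b, u) \<notin> Ts ! i)))"

lemma args_agreeD:
  assumes "args_agree A n Ps Ts" and "i < n"
  shows "fst (Ps ! i) = Ts ! i"
    and "b \<in> A \<Longrightarrow> b \<in> snd (Ps ! i) \<longleftrightarrow> (\<forall>u. (b, u) \<notin> Ts ! i)"
  using assms unfolding args_agree_def by auto

lemma wf_gsys_ruleD:
  assumes "wf_gsys A G" "\<rho> \<in> g_rules G"
  shows "\<And>i a y. (i, a, y) \<in> g_pos \<rho> \<Longrightarrow> i < g_ar G (g_op \<rho>) \<and> a \<in> A"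
    "\<And>i b. (i, b) \<in> g_neg \<rho> \<Longrightarrow> i < g_ar G (g_op \<rho>) \<and> b \<in> A"
    "\<And>i a y i' a'. (i, a, y) \<in> g_pos \<rho> \<Longrightarrow> (i', a', y) \<in> g_pos \<rho> \<Longrightarrow> i = i' \<and> a = a'"
  using assms unfolding wf_gsys_def wf_grule_def Let_def by fastforce+

lemma inst_map_Inl: "inst ts \<sigma> (map_term id (map_sum id Inl) C) = inst ts (\<sigma> \<circ> Inl) C"
proof (induction C)
  case (Var x) then show ?case by (cases x) auto
qed auto

lemma plus_rules_cases:
  assumes "\<rho> \<in> p_rules (plus A G)"
  obtains (conv) \<rho>0 where "\<rho>0 \<in> g_rules G" "\<rho> = conv \<rho>0"
  | (axiom) f a where "\<rho> = cannot_axiom f a" "g_ar G f = 0" "Rfa G f a = {}"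
  | (rule) f a \<phi> where "\<rho> = cannot_rule f a (Rfa G f a) \<phi>" "1 \<le> g_ar G f"
      "\<forall>\<xi> \<in> Rfa G f a. \<phi> \<xi> \<in> prems \<xi>"
  using assms unfolding plus_def by auto

lemma gstep_enabled_iff:
  assumes wf: "wf_gsys A G"
  shows "(\<exists>t. (a, t) \<in> gstep G f ts Ts) \<longleftrightarrow> (\<exists>\<xi> \<in> Rfa G f a. \<forall>\<pi> \<in> prems \<xi>. prem_holds Ts \<pi>)"
proof
  assume "\<exists>t. (a, t) \<in> gstep G f ts Ts"
  then obtain \<xi> \<sigma> where \<xi>: "\<xi> \<in> Rfa G f a"
    and pos: "\<forall>(i, c, y) \<in> g_pos \<xi>. (c, \<sigma> y) \<in> Ts ! i"
    and neg: "\<forall>(i, b) \<in> g_neg \<xi>. \<forall>u. (b, u) \<notin> Ts ! i"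
    unfolding gstep_def Rfa_def by auto
  have "prem_holds Ts \<pi>" if "\<pi> \<in> prems \<xi>" for \<pi>
    using that pos neg by (cases \<pi>) (auto simp: prems_def)
  with \<xi> show "\<exists>\<xi> \<in> Rfa G f a. \<forall>\<pi> \<in> prems \<xi>. prem_holds Ts \<pi>" by blast
next
  assume "\<exists>\<xi> \<in> Rfa G f a. \<forall>\<pi> \<in> prems \<xi>. prem_holds Ts \<pi>"
  then obtain \<xi> where \<xi>: "\<xi> \<in> g_rules G" "g_op \<xi> = f" "g_act \<xi> = a"
    and holds: "\<And>\<pi>. \<pi> \<in> prems \<xi> \<Longrightarrow> prem_holds Ts \<pi>"
    unfolding Rfa_def by auto
  have neg: "\<forall>(i, b) \<in> g_neg \<xi>. \<forall>u. (b, u) \<notin> Ts ! i"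
    using holds[of "PNeg _ _"] by (auto simp: prems_def)
  txt \<open>Each target variable y occurs in a single positive premise, so choosing a successor
    per variable is a consistent substitution.\<close>
  define \<sigma> where "\<sigma> y = (SOME u. \<exists>i c. (i, c, y) \<in> g_pos \<xi> \<and> (c, u) \<in> Ts ! i)" for y
  have "(c, \<sigma> y) \<in> Ts ! i" if icy: "(i, c, y) \<in> g_pos \<xi>" for i c y
  proof -
    have "\<exists>u. (c, u) \<in> Ts ! i"
      using holds[of "PPos i c y"] icy by (auto simp: prems_def)
    then have "\<exists>u i' c'. (i', c', y) \<in> g_pos \<xi> \<and> (c', u) \<in> Ts ! i'"
      using icy by blast
    from someI_ex[OF this] obtain i' c' where "(i', c', y) \<in> g_pos \<xi>" "(c', \<sigma> y) \<in> Ts ! i'"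
      unfolding \<sigma>_def by blast
    then show ?thesis using wf_gsys_ruleD(3)[OF wf \<xi>(1) icy] by simp
  qed
  then have "(a, inst ts \<sigma> (g_tgt \<xi>)) \<in> gstep G f ts Ts"
    unfolding gstep_def using \<xi> neg by blast
  then show "\<exists>t. (a, t) \<in> gstep G f ts Ts" ..
qed

lemma prems_empty_if_nullary:
  assumes "wf_gsys A G" "\<xi> \<in> g_rules G" "g_ar G (g_op \<xi>) = 0"
  shows "prems \<xi> = {}"
  using wf_gsys_ruleD(1,2)[OF assms(1,2)] assms(3) unfolding prems_def by fastforce

lemma conv_prems_ok_iff:
  assumes wf: "wf_gsys A G" and \<rho>: "\<rho> \<in> g_rules G"
    and agree: "args_agree A (g_ar G (g_op \<rho>)) Ps Ts"
  shows "pprem_ok (conv \<rho>) Ps \<sigma> \<longleftrightarrow>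
      (\<forall>(i, a, y) \<in> g_pos \<rho>. (a, \<sigma> (Inl y)) \<in> Ts ! i) \<and> (\<forall>(i, b) \<in> g_neg \<rho>. \<forall>u. (b, u) \<notin> Ts ! i)"
proof -
  note range = wf_gsys_ruleD(1,2)[OF wf \<rho>]
  have "(\<forall>(i, a, y) \<in> g_pos \<rho>. (a, \<sigma> (Inl y)) \<in> fst (Ps ! i))
      \<longleftrightarrow> (\<forall>(i, a, y) \<in> g_pos \<rho>. (a, \<sigma> (Inl y)) \<in> Ts ! i)"
    using range(1) args_agreeD(1)[OF agree] by fastforce
  moreover have "(\<forall>(i, b) \<in> g_neg \<rho>. b \<in> snd (Ps ! i))
      \<longleftrightarrow> (\<forall>(i, b) \<in> g_neg \<rho>. \<forall>u. (b, u) \<notin> Ts ! i)"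
    using range(2) args_agreeD(2)[OF agree] by fastforce
  ultimately show ?thesis
    unfolding pprem_ok_def conv_def by auto
qed

lemma plus_trans_eq_gstep:
  fixes G :: "('f, 'a, 'v) gsys"
  assumes wf: "wf_gsys A G" and agree: "args_agree A (g_ar G f) Ps Ts"
  shows "fst (pstep (plus A G) f ts Ps) = gstep G f ts Ts"
proof (intro set_eqI iffI)
  fix x assume "x \<in> fst (pstep (plus A G) f ts Ps)"
  then obtain c t \<rho> C \<sigma> where x: "x = (c, t)" and r: "\<rho> \<in> p_rules (plus A G)" "p_op \<rho> = f"
    "p_concl \<rho> = CTrans c C" "pprem_ok \<rho> Ps \<sigma>" "t = inst ts \<sigma> C"
    unfolding pstep_def by auto
  from r(1) show "x \<in> gstep G f ts Ts"
  proof (cases rule: plus_rules_cases)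
    case (conv \<rho>0)
    have op: "g_op \<rho>0 = f" and c: "c = g_act \<rho>0"
      and C: "C = map_term id (map_sum id Inl) (g_tgt \<rho>0)"
      using r conv by (auto simp: conv_def)
    have "(\<forall>(i, a, y) \<in> g_pos \<rho>0. (a, (\<sigma> \<circ> Inl) y) \<in> Ts ! i)
        \<and> (\<forall>(i, b) \<in> g_neg \<rho>0. \<forall>u. (b, u) \<notin> Ts ! i)"
      using conv_prems_ok_iff[OF wf conv(1)] agree r(4) conv(2) op by simp
    then show ?thesis
      unfolding gstep_def x r(5) C c inst_map_Inl using conv(1) op
      by (intro CollectI case_prodI bexI[of _ \<rho>0] conjI exI[of _ "\<sigma> \<circ> Inl"]) auto
  qed (use r in \<open>simp_all add: cannot_axiom_def cannot_rule_def\<close>)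
next
  fix x assume "x \<in> gstep G f ts Ts"
  then obtain c t \<rho> \<sigma> where x: "x = (c, t)" and r: "\<rho> \<in> g_rules G" "g_op \<rho> = f" "g_act \<rho> = c"
    "\<forall>(i, a, y) \<in> g_pos \<rho>. (a, \<sigma> y) \<in> Ts ! i"
    "\<forall>(i, b) \<in> g_neg \<rho>. \<forall>u. (b, u) \<notin> Ts ! i" "t = inst ts \<sigma> (g_tgt \<rho>)"
    unfolding gstep_def by auto
  define \<sigma>' :: "'v + ('f, 'a, 'v) grule \<Rightarrow> 'f gterm" where "\<sigma>' = case_sum \<sigma> (\<lambda>_. undefined)"
  have "pprem_ok (conv \<rho>) Ps \<sigma>'"
    using conv_prems_ok_iff[OF wf r(1)] agree r by (simp add: \<sigma>'_def)
  moreover have "conv \<rho> \<in> p_rules (plus A G)" using r(1) by (simp add: plus_def)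
  moreover have "t = inst ts \<sigma>' (map_term id (map_sum id Inl) (g_tgt \<rho>))"
    using r(6) by (simp add: inst_map_Inl \<sigma>'_def comp_def)
  ultimately show "x \<in> fst (pstep (plus A G) f ts Ps)"
    unfolding pstep_def fst_conv x using r(2,3)
    by (intro CollectI case_prodI bexI[of _ "conv \<rho>"] conjI exI) (auto simp: conv_def)
qed

lemma cannot_rule_enabled_iff:
  fixes G :: "('f, 'a, 'v) gsys" and Ts :: "('a \<times> 'f gterm) set list"
  assumes wf: "wf_gsys A G" and agree: "args_agree A (g_ar G f) Ps Ts"
    and \<phi>: "\<forall>\<xi> \<in> Rfa G f a. \<phi> \<xi> \<in> prems \<xi>"
  shows "(\<exists>\<sigma>. pprem_ok (cannot_rule f a (Rfa G f a) \<phi>) Ps \<sigma>)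
      \<longleftrightarrow> (\<forall>\<xi> \<in> Rfa G f a. \<not> prem_holds Ts (\<phi> \<xi>))"
proof -
  have pos: "(b, u) \<in> fst (Ps ! i) \<longleftrightarrow> (b, u) \<in> Ts ! i"
    if "\<xi> \<in> Rfa G f a" "\<phi> \<xi> = PNeg i b" for \<xi> i b u
  proof -
    have "\<xi> \<in> g_rules G" "g_op \<xi> = f" "(i, b) \<in> g_neg \<xi>"
      using that \<phi> by (auto simp: Rfa_def prems_def)
    then show ?thesis using wf_gsys_ruleD(2)[OF wf] args_agreeD(1)[OF agree] by metis
  qed
  have ppos: "c \<in> snd (Ps ! i) \<longleftrightarrow> (\<forall>u. (c, u) \<notin> Ts ! i)"
    if "\<xi> \<in> Rfa G f a" "\<phi> \<xi> = PPos i c y" for \<xi> i c y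
  proof -
    have "\<xi> \<in> g_rules G" "g_op \<xi> = f" "(i, c, y) \<in> g_pos \<xi>"
      using that \<phi> by (auto simp: Rfa_def prems_def)
    then show ?thesis using wf_gsys_ruleD(1)[OF wf] args_agreeD(2)[OF agree] by metis
  qed
  have ok_iff: "pprem_ok (cannot_rule f a (Rfa G f a) \<phi>) Ps \<sigma> \<longleftrightarrow>
      (\<forall>\<xi> \<in> Rfa G f a. (\<forall>i b. \<phi> \<xi> = PNeg i b \<longrightarrow> (b, \<sigma> (Inr \<xi>)) \<in> Ts ! i)
        \<and> (\<forall>i c y. \<phi> \<xi> = PPos i c y \<longrightarrow> (\<forall>u. (c, u) \<notin> Ts ! i)))" for \<sigma>
    unfolding pprem_ok_def cannot_rule_def using pos ppos by (auto 0 4)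
  show ?thesis
  proof
    assume "\<exists>\<sigma>. pprem_ok (cannot_rule f a (Rfa G f a) \<phi>) Ps \<sigma>"
    then obtain \<sigma> where ok: "pprem_ok (cannot_rule f a (Rfa G f a) \<phi>) Ps \<sigma>" ..
    show "\<forall>\<xi> \<in> Rfa G f a. \<not> prem_holds Ts (\<phi> \<xi>)"
    proof
      fix \<xi> assume "\<xi> \<in> Rfa G f a"
      then show "\<not> prem_holds Ts (\<phi> \<xi>)"
        using ok unfolding ok_iff by (cases "\<phi> \<xi>") auto
    qed
  next
    assume fails: "\<forall>\<xi> \<in> Rfa G f a. \<not> prem_holds Ts (\<phi> \<xi>)"
    txt \<open>Only the fresh targets Inr \<xi> occur in the premises; each is sent to a witness
      of the failure of the negative premise \<phi> \<xi>.\<close>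
    define \<sigma> :: "'v + ('f, 'a, 'v) grule \<Rightarrow> 'f gterm" where "\<sigma> = case_sum (\<lambda>_. undefined)
        (\<lambda>\<xi>. case \<phi> \<xi> of PNeg i b \<Rightarrow> (SOME u. (b, u) \<in> Ts ! i) | PPos _ _ _ \<Rightarrow> undefined)"
    have "pprem_ok (cannot_rule f a (Rfa G f a) \<phi>) Ps \<sigma>"
      unfolding ok_iff
    proof (intro ballI conjI allI impI)
      fix \<xi> i b assume "\<xi> \<in> Rfa G f a" "\<phi> \<xi> = PNeg i b"
      then have "\<exists>u. (b, u) \<in> Ts ! i" using fails by force
      then show "(b, \<sigma> (Inr \<xi>)) \<in> Ts ! i"
        unfolding \<sigma>_def using \<open>\<phi> \<xi> = PNeg i b\<close>
        by (simp add: someI_ex[where P = "\<lambda>u. (b, u) \<in> Ts ! i"])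
    next
      fix \<xi> i c y u assume "\<xi> \<in> Rfa G f a" "\<phi> \<xi> = PPos i c y"
      then show "(c, u) \<notin> Ts ! i" using fails by force
    qed
    then show "\<exists>\<sigma>. pprem_ok (cannot_rule f a (Rfa G f a) \<phi>) Ps \<sigma>" by blast
  qed
qed

lemma plus_cannot_iff_blocked:
  assumes wf: "wf_gsys A G" and agree: "args_agree A (g_ar G f) Ps Ts"
    and f: "f \<in> g_sig G" and a: "a \<in> A"
  shows "a \<in> snd (pstep (plus A G) f ts Ps) \<longleftrightarrow> (\<forall>\<xi> \<in> Rfa G f a. \<exists>\<pi> \<in> prems \<xi>. \<not> prem_holds Ts \<pi>)"
proof
  assume "a \<in> snd (pstep (plus A G) f ts Ps)"
  then obtain \<rho> \<sigma> where r: "\<rho> \<in> p_rules (plus A G)" "p_op \<rho> = f"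
    "p_concl \<rho> = CPred a" "pprem_ok \<rho> Ps \<sigma>"
    unfolding pstep_def by auto
  from r(1) show "\<forall>\<xi> \<in> Rfa G f a. \<exists>\<pi> \<in> prems \<xi>. \<not> prem_holds Ts \<pi>"
  proof (cases rule: plus_rules_cases)
    case (axiom f' a')
    then show ?thesis using r by (simp add: cannot_axiom_def)
  next
    case (rule f' a' \<phi>)
    then have "f' = f" "a' = a" using r by (auto simp: cannot_rule_def)
    with rule r(4) cannot_rule_enabled_iff[OF wf agree, of a \<phi>] show ?thesis by blast
  qed (use r in \<open>simp add: conv_def\<close>)
next
  assume blocked: "\<forall>\<xi> \<in> Rfa G f a. \<exists>\<pi> \<in> prems \<xi>. \<not> prem_holds Ts \<pi>"
  show "a \<in> snd (pstep (plus A G) f ts Ps)"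
  proof (cases "g_ar G f = 0")
    case True
    then have "Rfa G f a = {}"
      using blocked prems_empty_if_nullary[OF wf] by (fastforce simp: Rfa_def)
    then have "cannot_axiom f a \<in> p_rules (plus A G)"
      using f a True by (auto simp: plus_def)
    then show ?thesis
      unfolding pstep_def by (force simp: cannot_axiom_def pprem_ok_def)
  next
    case False
    from blocked obtain \<phi> where \<phi>: "\<forall>\<xi> \<in> Rfa G f a. \<phi> \<xi> \<in> prems \<xi> \<and> \<not> prem_holds Ts (\<phi> \<xi>)"
      by metis
    then have "cannot_rule f a (Rfa G f a) \<phi> \<in> p_rules (plus A G)"
      using f a False unfolding plus_def by fastforce
    moreover have "\<exists>\<sigma>. pprem_ok (cannot_rule f a (Rfa G f a) \<phi>) Ps \<sigma>"
      using cannot_rule_enabled_iff[OF wf agree] \<phi> by blast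
    ultimately show ?thesis
      unfolding pstep_def by (force simp: cannot_rule_def)
  qed
qed

lemma psem_plus_agrees:
  assumes wf: "wf_gsys A G" and p: "wf_gterm (g_sig G) (g_ar G) p"
  shows "fst (psem (plus A G) p) = gsem G p
     \<and> (\<forall>b \<in> A. b \<in> snd (psem (plus A G) p) \<longleftrightarrow> (\<forall>u. (b, u) \<notin> gsem G p))"
  using p
proof (induction rule: wf_gterm.induct)
  case (1 f ts)
  let ?Ps = "map (psem (plus A G)) ts" and ?Ts = "map (gsem G) ts"
  have agree: "args_agree A (g_ar G f) ?Ps ?Ts"
    using 1 nth_mem[of _ ts] unfolding args_agree_def by auto
  have "b \<in> snd (pstep (plus A G) f ts ?Ps) \<longleftrightarrow> (\<forall>u. (b, u) \<notin> gstep G f ts ?Ts)" if "b \<in> A" for b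
    using plus_cannot_iff_blocked[OF wf agree 1(1) that] gstep_enabled_iff[OF wf, of b f ts ?Ts]
    by blast
  then show ?case
    using plus_trans_eq_gstep[OF wf agree] by simp
qed

theorem lemma6:
  fixes A :: "'a set" and G :: "('f, 'a, 'v) gsys" and p :: "'f gterm" and a :: 'a
  assumes "wf_gsys A G" and "wf_gterm (g_sig G) (g_ar G) p" and "a \<in> A"
  shows "(\<forall>p'. (a, p') \<in> gsem G p \<longleftrightarrow> (a, p') \<in> fst (psem (plus A G) p))
       \<and> (a \<in> snd (psem (plus A G) p) \<longleftrightarrow> \<not> (\<exists>p'. (a, p') \<in> fst (psem (plus A G) p)))
       \<and> (a \<in> snd (psem (plus A G) p) \<longleftrightarrow> \<not> (\<exists>p'. (a, p') \<in> gsem G p))"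
  using psem_plus_agrees[OF assms(1,2)] assms(3) by auto

end
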